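(* Let $G=A*_C B$ with generating set $S=(A\cup B)\setminus\{1\}$, let $a_1,a_2\in A\setminus C$ with $a_2\notin Ca_1C$, and let $b\in B\setminus C$. For $i\ge0$ let $$w_i=(a_1b)^{10^i}(a_1^{-1}b^{-1})^{10^i}(a_2b)^{10^i}(a_2^{-1}b^{-1})^{10^i}(a_1b)^{4\cdot10^i}(a_1^{-1}b^{-1})^{4\cdot10^i}(a_2b)^{4\cdot10^i}(a_2^{-1}b^{-1})^{4\cdot10^i}.$$ Then: (1) $c_{w_i}(\overline{w_i^n})=n$ for all $n\ge1$, $i\ge0$; (2) $c_{w_i^{-1}}(\overline{w_i^n})=0$ for all $n\ge1$, $i\ge0$; (3) $c_{w_j}(\overline{w_i^n})=0$ for all $j>i\ge0$, $n\ge1$; (4) $c_{w_j^{-1}}(\overline{w_i^n})=0$ for all $j>i\ge0$, $n\ge1$.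
   Context: Words are finite sequences of letters in $S$; $\bar u$ is the element represented, $|u|$ the length, $u^{-1}$ the formal inverse word, $|g|$ the word length of $g\in G$. For a nonempty word $w$ and a word $u$, $|u|_w$ is the maximal number of pairwise non-overlapping occurrences of $w$ as a contiguous subword of $u$, and $c_w(g)=|g|-\min\{|v|-|v|_w:\bar v=g\}$. *)

theory Defs
  imports "HOL-Algebra.Algebra"
begin

text \<open>Internal amalgamated free product: G = A *_C B, via the normal form theorem
  (A, B subgroups generating G, C = A \<inter> B, and every nonempty product of elements
  alternately from A - C and B - C is nontrivial).\<close>

definition alternating :: "'g set \<Rightarrow> 'g set \<Rightarrow> 'g set \<Rightarrow> 'g list \<Rightarrow> bool" where
  "alternating A B C gs \<longleftrightarrow>
     (\<forall>i<length gs. gs ! i \<in> (A - C) \<union> (B - C)) \<and>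
     (\<forall>i. Suc i < length gs \<longrightarrow>
        \<not> (gs ! i \<in> A \<and> gs ! Suc i \<in> A) \<and> \<not> (gs ! i \<in> B \<and> gs ! Suc i \<in> B))"

definition word_eval :: "('g, 'b) monoid_scheme \<Rightarrow> 'g list \<Rightarrow> 'g" where
  "word_eval G u = foldr (\<lambda>x y. x \<otimes>\<^bsub>G\<^esub> y) u \<one>\<^bsub>G\<^esub>"

definition amalgamated_product ::
  "('g, 'b) monoid_scheme \<Rightarrow> 'g set \<Rightarrow> 'g set \<Rightarrow> 'g set \<Rightarrow> bool" where
  "amalgamated_product G A B C \<longleftrightarrow>
     group G \<and> subgroup A G \<and> subgroup B G \<and> C = A \<inter> B \<and>
     generate G (A \<union> B) = carrier G \<and>
     (\<forall>gs. gs \<noteq> [] \<and> alternating A B C gs \<longrightarrow> word_eval G gs \<noteq> \<one>\<^bsub>G\<^esub>)"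

definition word_inv :: "('g, 'b) monoid_scheme \<Rightarrow> 'g list \<Rightarrow> 'g list" where
  "word_inv G u = rev (map (\<lambda>x. inv\<^bsub>G\<^esub> x) u)"

definition word_length :: "('g, 'b) monoid_scheme \<Rightarrow> 'g set \<Rightarrow> 'g \<Rightarrow> nat" where
  "word_length G S g = (LEAST n. \<exists>u. set u \<subseteq> S \<and> length u = n \<and> word_eval G u = g)"

definition occ_count :: "'a list \<Rightarrow> 'a list \<Rightarrow> nat" where
  "occ_count w u = Max {k. \<exists>ps :: nat list. length ps = k \<and>
      (\<forall>i<k. ps ! i + length w \<le> length u \<and> take (length w) (drop (ps ! i) u) = w) \<and>
      (\<forall>i. Suc i < k \<longrightarrow> ps ! i + length w \<le> ps ! Suc i)}"

definition cw :: "('g, 'b) monoid_scheme \<Rightarrow> 'g set \<Rightarrow> 'g list \<Rightarrow> 'g \<Rightarrow> int" where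
  "cw G S w g = int (word_length G S g) -
     int (LEAST m. \<exists>v. set v \<subseteq> S \<and> word_eval G v = g \<and> m = length v - occ_count w v)"

definition wpow :: "'a list \<Rightarrow> nat \<Rightarrow> 'a list" where
  "wpow u n = concat (replicate n u)"

definition w_word :: "('g, 'b) monoid_scheme \<Rightarrow> 'g \<Rightarrow> 'g \<Rightarrow> 'g \<Rightarrow> nat \<Rightarrow> 'g list" where
  "w_word G a1 a2 b i =
     (let N = 10 ^ i; ai = (\<lambda>x. inv\<^bsub>G\<^esub> x); M = 4 * 10 ^ i in
      wpow [a1, b] N @ wpow [ai a1, ai b] N @ wpow [a2, b] N @ wpow [ai a2, ai b] N @
      wpow [a1, b] M @ wpow [ai a1, ai b] M @ wpow [a2, b] M @ wpow [ai a2, ai b] M)"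

end

theory Submission
  imports Defs
begin

(* Reduced (alternating) words are geodesic for S = (A \<union> B) - {1}, and reading any word v
   letter by letter, while keeping a reduced form of the prefix read so far, ends in a reduced
   word that agrees letterwise, up to double cosets C x C, with every reduced word for the same
   element (normal form theorem).
   Write w = y # T with y and the last letter of T in different factors. During the reduction the
   weight |xs| - |xs|_T of the stack xs grows by at most one per letter read, and by at most
   |w| - 1 while an occurrence of w is read: either y is absorbed by the stack, or all of w is
   pushed and creates a new occurrence of T. So |v| - |v|_w is at least the final weight, which
   is |g| if T does not occur in the reduced form of g up to double cosets; then c_w(g) = 0.
   For w = w_i itself, |v| >= n |w| and |v|_w |w| <= |v| give c_w(w^n) = n.
   The rest is a check on the A-letters of w_i, which run through blocks of a1, a1^-1, a2, a2^-1
   of lengths N, N, N, N, 4N, 4N, 4N, 4N with N = 10^i. As a1 and a2, and also their inverses,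
   lie in different double cosets, no cyclic shift of these blocks matches the A-letters of the
   tail of w_j or of w_j^-1 for j > i, nor those of the tail of w_i^-1. *)

lemma word_eval_Nil [simp]: "word_eval G [] = \<one>\<^bsub>G\<^esub>"
  by (simp add: word_eval_def)

lemma word_eval_Cons [simp]: "word_eval G (x # xs) = x \<otimes>\<^bsub>G\<^esub> word_eval G xs"
  by (simp add: word_eval_def)

lemma length_word_inv [simp]: "length (word_inv G xs) = length xs"
  by (simp add: word_inv_def)

lemma word_inv_eq_Nil_iff [simp]: "word_inv G xs = [] \<longleftrightarrow> xs = []"
  by (simp add: word_inv_def)

lemma word_inv_Cons: "word_inv G (x # xs) = word_inv G xs @ [inv\<^bsub>G\<^esub> x]"
  by (simp add: word_inv_def)

lemma word_inv_nth: "k < length xs \<Longrightarrow> word_inv G xs ! k = inv\<^bsub>G\<^esub> (xs ! (length xs - Suc k))"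
  by (simp add: word_inv_def rev_nth)

lemma hd_word_inv: "xs \<noteq> [] \<Longrightarrow> hd (word_inv G xs) = inv\<^bsub>G\<^esub> (last xs)"
  and last_word_inv: "xs \<noteq> [] \<Longrightarrow> last (word_inv G xs) = inv\<^bsub>G\<^esub> (hd xs)"
  by (simp_all add: word_inv_def hd_rev last_rev hd_map last_map)

context group
begin

lemma subgroup_mult_right_iff:
  assumes "subgroup H G" "x \<in> carrier G" "c \<in> H"
  shows "x \<otimes> c \<in> H \<longleftrightarrow> x \<in> H"
proof
  assume "x \<otimes> c \<in> H"
  then have "x \<otimes> c \<otimes> inv c \<in> H"
    using assms subgroup.m_closed[OF assms(1)] subgroup.m_inv_closed[OF assms(1)] by blast
  then show "x \<in> H"
    using assms by (simp add: m_assoc subgroup.mem_carrier)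
qed (use assms in \<open>simp add: subgroup.m_closed\<close>)

lemma subgroup_mult_left_iff:
  assumes "subgroup H G" "x \<in> carrier G" "c \<in> H"
  shows "c \<otimes> x \<in> H \<longleftrightarrow> x \<in> H"
proof
  assume "c \<otimes> x \<in> H"
  then have "inv c \<otimes> (c \<otimes> x) \<in> H"
    using assms subgroup.m_closed[OF assms(1)] subgroup.m_inv_closed[OF assms(1)] by blast
  then show "x \<in> H"
    using assms by (simp add: m_assoc[symmetric] subgroup.mem_carrier)
qed (use assms in \<open>simp add: subgroup.m_closed\<close>)

lemma subgroup_inv_iff:
  assumes "subgroup H G" "x \<in> carrier G"
  shows "inv x \<in> H \<longleftrightarrow> x \<in> H"
  using assms subgroup.m_inv_closed[OF assms(1)] by (metis inv_inv)

lemma word_eval_closed: "set xs \<subseteq> carrier G \<Longrightarrow> word_eval G xs \<in> carrier G"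
  by (induction xs) auto

lemma word_eval_append:
  "set xs \<subseteq> carrier G \<Longrightarrow> set ys \<subseteq> carrier G \<Longrightarrow>
    word_eval G (xs @ ys) = word_eval G xs \<otimes> word_eval G ys"
  by (induction xs) (auto simp: m_assoc word_eval_closed)

lemma set_word_inv: "set xs \<subseteq> carrier G \<Longrightarrow> set (word_inv G xs) \<subseteq> carrier G"
  by (auto simp: word_inv_def)

lemma word_eval_word_inv:
  "set xs \<subseteq> carrier G \<Longrightarrow> word_eval G (word_inv G xs) = inv (word_eval G xs)"
proof (induction xs)
  case (Cons x xs)
  then have "word_eval G (word_inv G (x # xs)) = inv (word_eval G xs) \<otimes> inv x"
    by (simp add: word_inv_Cons word_eval_append set_word_inv)
  with Cons.prems show ?case
    by (simp add: inv_mult_group word_eval_closed)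
qed (simp add: word_inv_def)

lemma word_eval_snoc_cancel:
  assumes "set xs \<subseteq> carrier G" "x \<in> carrier G" "set ys \<subseteq> carrier G" "y \<in> carrier G"
    "c \<in> carrier G"
    and "word_eval G (xs @ [x]) = word_eval G (ys @ [y]) \<otimes> c"
  shows "word_eval G xs = word_eval G ys \<otimes> (y \<otimes> (c \<otimes> inv x))"
proof -
  have "word_eval G xs = word_eval G (xs @ [x]) \<otimes> inv x"
    using assms(1-5) by (simp add: word_eval_append m_assoc word_eval_closed)
  also have "\<dots> = word_eval G (ys @ [y]) \<otimes> c \<otimes> inv x"
    using assms(6) by simp
  also have "\<dots> = word_eval G ys \<otimes> (y \<otimes> (c \<otimes> inv x))"
    using assms(1-5) by (simp add: word_eval_append m_assoc word_eval_closed)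
  finally show ?thesis .
qed

lemma word_eval_append_word_inv:
  assumes "set xs \<subseteq> carrier G" "set ys \<subseteq> carrier G"
  shows "word_eval G (xs @ word_inv G ys) = word_eval G xs \<otimes> inv (word_eval G ys)"
  using assms by (simp add: word_eval_append word_eval_word_inv set_word_inv)

end

section \<open>Subword occurrences and c_w\<close>

definition occurrences :: "'a list \<Rightarrow> 'a list \<Rightarrow> nat list \<Rightarrow> bool" where
  "occurrences w u ps \<longleftrightarrow>
     (\<forall>p\<in>set ps. p + length w \<le> length u \<and> take (length w) (drop p u) = w) \<and>
     sorted_wrt (\<lambda>p q. p + length w \<le> q) ps"

lemma occ_count_conv_occurrences:
  "occ_count w u = Max (length ` Collect (occurrences w u))"
proof -
  have "transp (\<lambda>p q. p + length w \<le> (q::nat))"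
    by (auto intro: transpI)
  then have "occurrences w u ps \<longleftrightarrow>
      (\<forall>i<length ps. ps ! i + length w \<le> length u \<and> take (length w) (drop (ps ! i) u) = w) \<and>
      (\<forall>i. Suc i < length ps \<longrightarrow> ps ! i + length w \<le> ps ! Suc i)" for ps
    unfolding occurrences_def
    by (simp add: all_set_conv_all_nth successively_conv_sorted_wrt[symmetric]
        successively_conv_nth)
  then show ?thesis
    unfolding occ_count_def by (intro arg_cong[where f = Max]) auto
qed

lemma occurrence_split:
  "p + length w \<le> length u \<Longrightarrow> take (length w) (drop p u) = w \<Longrightarrow>
    u = take p u @ w @ drop (p + length w) u"
proof -
  assume "take (length w) (drop p u) = w"
  then have "drop p u = w @ drop (p + length w) u"
    by (metis append_take_drop_id drop_drop add.commute)
  then show ?thesis by (metis append_take_drop_id)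
qed

lemma occurrences_snocD:
  assumes "occurrences w u (ps @ [p])"
  shows "u = take p u @ w @ drop (p + length w) u" and "occurrences w (take p u) ps"
proof -
  have p: "p + length w \<le> length u" "take (length w) (drop p u) = w"
    and before: "\<forall>q\<in>set ps. q + length w \<le> p"
    using assms by (auto simp: occurrences_def sorted_wrt_append)
  from p(1,2) show "u = take p u @ w @ drop (p + length w) u"
    by (rule occurrence_split)
  show "occurrences w (take p u) ps"
    using assms before p(1) by (auto simp: occurrences_def sorted_wrt_append take_drop min_def)
qed

lemma occurrences_length:
  "occurrences w u ps \<Longrightarrow> length ps * length w \<le> length u"
proof (induction ps arbitrary: u rule: rev_induct)
  case (snoc p ps)
  have "length ps * length w \<le> p"
    using snoc.IH[OF occurrences_snocD(2)[OF snoc.prems]] snoc.prems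
    by (simp add: occurrences_def)
  moreover have "p + length w \<le> length u"
    using snoc.prems by (simp add: occurrences_def)
  ultimately show ?case by simp
qed simp

lemma occurrences_Nil: "occurrences w u []"
  by (simp add: occurrences_def)

lemma finite_occurrence_counts:
  assumes "w \<noteq> []" shows "finite (length ` Collect (occurrences w u))"
proof (rule finite_subset)
  have "length ps \<le> length u" if "occurrences w u ps" for ps
  proof -
    have "length ps \<le> length ps * length w"
      using assms by (cases w) auto
    with occurrences_length[OF that] show ?thesis by linarith
  qed
  then show "length ` Collect (occurrences w u) \<subseteq> {..length u}"
    by auto
qed simp

lemma occ_count_ge:
  "w \<noteq> [] \<Longrightarrow> occurrences w u ps \<Longrightarrow> length ps \<le> occ_count w u"
  unfolding occ_count_conv_occurrences by (auto intro: Max_ge finite_occurrence_counts)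

lemma occ_count_obtain:
  assumes "w \<noteq> []"
  obtains ps where "occurrences w u ps" "length ps = occ_count w u"
proof -
  have "occ_count w u \<in> length ` Collect (occurrences w u)"
    unfolding occ_count_conv_occurrences using finite_occurrence_counts[OF assms] occurrences_Nil
    by (intro Max_in) auto
  then show ?thesis using that by auto
qed

lemma occ_count_le_length:
  "w \<noteq> [] \<Longrightarrow> occ_count w u * length w \<le> length u"
  by (metis occ_count_obtain occurrences_length)

lemma occ_count_append:
  assumes "w \<noteq> []" shows "occ_count w u \<le> occ_count w (u @ v)"
proof -
  obtain ps where ps: "occurrences w u ps" "length ps = occ_count w u"
    using occ_count_obtain[OF assms] .
  have "occurrences w (u @ v) ps"
    using ps(1) by (auto simp: occurrences_def)
  from occ_count_ge[OF assms this] ps(2) show ?thesis by simp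
qed

lemma occ_count_append_occurrence:
  assumes "w \<noteq> []" shows "occ_count w u < occ_count w (u @ v @ w)"
proof -
  obtain ps where ps: "occurrences w u ps" "length ps = occ_count w u"
    using occ_count_obtain[OF assms] .
  have "occurrences w (u @ v @ w) (ps @ [length u + length v])"
    using ps(1) by (auto simp: occurrences_def sorted_wrt_append)
  from occ_count_ge[OF assms this] ps(2) show ?thesis by simp
qed

lemma occurrences_butlast:
  assumes "occurrences w u ps" "\<forall>p\<in>set ps. p + length w < length u"
  shows "occurrences w (butlast u) ps"
  using assms by (auto simp: occurrences_def butlast_conv_take drop_take min_def)

lemma occ_count_butlast:
  assumes "w \<noteq> []" shows "occ_count w u \<le> Suc (occ_count w (butlast u))"
proof -
  obtain ps where ps: "occurrences w u ps" "length ps = occ_count w u"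
    using occ_count_obtain[OF assms] .
  show ?thesis
  proof (cases ps rule: rev_exhaust)
    case (snoc ps' p)
    have last_end: "p + length w \<le> length u" and before: "\<forall>q\<in>set ps'. q + length w \<le> p"
      and ps': "occurrences w u ps'"
      using ps(1) by (auto simp: snoc occurrences_def sorted_wrt_append)
    have "\<forall>q\<in>set ps'. q + length w < length u"
    proof
      fix q assume "q \<in> set ps'"
      with before have "q + length w \<le> p" by blast
      with last_end assms show "q + length w < length u" by (cases w) auto
    qed
    with ps' have "occurrences w (butlast u) ps'"
      by (rule occurrences_butlast)
    from occ_count_ge[OF assms this] ps(2) snoc show ?thesis by simp
  qed (use ps in simp)
qed

lemma occ_count_butlast_last:
  assumes "w \<noteq> []" "last u \<noteq> last w"
  shows "occ_count w u \<le> occ_count w (butlast u)"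
proof -
  obtain ps where ps: "occurrences w u ps" "length ps = occ_count w u"
    using occ_count_obtain[OF assms(1)] .
  have "\<forall>p\<in>set ps. p + length w < length u"
  proof
    fix p assume "p \<in> set ps"
    then have p: "p + length w \<le> length u" "take (length w) (drop p u) = w"
      using ps(1) by (auto simp: occurrences_def)
    show "p + length w < length u"
    proof (rule ccontr)
      assume "\<not> p + length w < length u"
      then have "u = take p u @ w"
        using occurrence_split[OF p] p(1) by simp
      then have "last u = last w"
        using assms(1) by (metis last_appendR)
      with assms(2) show False ..
    qed
  qed
  from occ_count_ge[OF assms(1) occurrences_butlast[OF ps(1) this]] ps(2) show ?thesis
    by simp
qed

lemma occ_count_pos_obtain:
  assumes "w \<noteq> []" "0 < occ_count w u"
  obtains x y where "u = x @ w @ y"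
proof -
  obtain ps where ps: "occurrences w u ps" "length ps = occ_count w u"
    using occ_count_obtain[OF assms(1)] .
  then obtain p where "p \<in> set ps"
    using assms(2) by (metis length_greater_0_conv list.set_sel(1))
  with ps(1) have "u = take p u @ w @ drop (p + length w) u"
    by (intro occurrence_split) (auto simp: occurrences_def)
  then show ?thesis using that by blast
qed

definition weight :: "'a list \<Rightarrow> 'a list \<Rightarrow> int" where
  "weight w u = int (length u) - int (occ_count w u)"

lemma weight_snoc_le: "w \<noteq> [] \<Longrightarrow> weight w (u @ [x]) \<le> weight w u + 1"
  using occ_count_append[of w u "[x]"] by (simp add: weight_def)

lemma weight_butlast_le: "w \<noteq> [] \<Longrightarrow> weight w (butlast u) \<le> weight w u"
  using occ_count_butlast[of w u]
  by (cases "u = []") (auto simp: weight_def of_nat_diff Suc_le_eq)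

lemma weight_butlast_less:
  "w \<noteq> [] \<Longrightarrow> u \<noteq> [] \<Longrightarrow> last u \<noteq> last w \<Longrightarrow> weight w (butlast u) < weight w u"
  using occ_count_butlast_last[of w u] by (simp add: weight_def of_nat_diff Suc_le_eq)

lemma weight_append_occurrence:
  "w \<noteq> [] \<Longrightarrow> weight w (u @ v @ w) < weight w u + length v + length w"
  using occ_count_append_occurrence[of w u v] by (simp add: weight_def)

lemma wpow_0 [simp]: "wpow u 0 = []"
  by (simp add: wpow_def)

lemma wpow_Suc [simp]: "wpow u (Suc n) = u @ wpow u n"
  by (simp add: wpow_def)

lemma length_wpow [simp]: "length (wpow u n) = n * length u"
  by (induction n) auto

lemma wpow_Suc_right: "wpow u (Suc n) = wpow u n @ u"
  by (induction n) auto

lemma set_wpow: "set (wpow u n) \<subseteq> set u"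
  by (induction n) auto

lemma wpow_nth: "m < n * length u \<Longrightarrow> wpow u n ! m = u ! (m mod length u)"
proof (induction n arbitrary: m)
  case (Suc n)
  then show ?case
    by (cases "m < length u") (auto simp: nth_append le_mod_geq)
qed simp

lemma occ_count_wpow:
  assumes "w \<noteq> []" shows "occ_count w (wpow w n) = n"
proof (rule antisym)
  show "occ_count w (wpow w n) \<le> n"
    using occ_count_le_length[OF assms, of "wpow w n"] assms by simp
  show "n \<le> occ_count w (wpow w n)"
  proof (induction n)
    case (Suc n)
    have "occ_count w (wpow w n) < occ_count w (wpow w (Suc n))"
      using occ_count_append_occurrence[OF assms, of "wpow w n" "[]"]
      by (simp only: wpow_Suc_right append_Nil)
    with Suc show ?case by simp
  qed simp
qed

lemma diff_le_diff_of_mult_le: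
  fixes n k l m :: nat
  assumes "n * l \<le> m" "k * l \<le> m"
  shows "n * l - n \<le> m - k"
proof (cases "k \<le> n")
  case False
  then have "n * (l - 1) \<le> k * (l - 1)"
    by simp
  with assms(2) show ?thesis
    by (simp add: diff_mult_distrib2)
qed (use assms in simp)

lemma cw_eqI:
  assumes "word_length G S g = l"
    and "set v\<^sub>0 \<subseteq> S" "word_eval G v\<^sub>0 = g" "length v\<^sub>0 - occ_count w v\<^sub>0 = m"
    and "\<And>v. set v \<subseteq> S \<Longrightarrow> word_eval G v = g \<Longrightarrow> m \<le> length v - occ_count w v"
  shows "cw G S w g = int l - int m"
proof -
  have "(LEAST m. \<exists>v. set v \<subseteq> S \<and> word_eval G v = g \<and> m = length v - occ_count w v) = m"
    using assms(2-5) by (intro Least_equality) auto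
  with assms(1) show ?thesis
    by (simp add: cw_def)
qed

section \<open>Reduced words in an amalgamated product\<close>

locale amalgam = group G for G :: "('g, 'b) monoid_scheme" (structure) +
  fixes A B C :: "'g set"
  assumes subgroup_A: "subgroup A G" and subgroup_B: "subgroup B G" and C_eq: "C = A \<inter> B"
    and reduced_word_neq_one: "gs \<noteq> [] \<Longrightarrow> alternating A B C gs \<Longrightarrow> word_eval G gs \<noteq> \<one>"
begin

lemma subgroup_C: "subgroup C G"
  unfolding C_eq using subgroup_A subgroup_B by (rule subgroups_Inter_pair)

lemma A_closed: "A \<subseteq> carrier G" and B_closed: "B \<subseteq> carrier G" and C_closed: "C \<subseteq> carrier G"
  using subgroup_A subgroup_B subgroup_C by (auto dest: subgroup.subset)

lemma one_in_C [simp]: "\<one> \<in> C" and inv_in_C: "c \<in> C \<Longrightarrow> inv c \<in> C"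
  using subgroup_C by (auto intro: subgroup.one_closed subgroup.m_inv_closed)

definition side :: "'g \<Rightarrow> bool \<times> bool" where
  "side x = (x \<in> A, x \<in> B)"

definition opposite :: "'g \<Rightarrow> 'g \<Rightarrow> bool" where
  "opposite x y \<longleftrightarrow> \<not> (x \<in> A \<and> y \<in> A) \<and> \<not> (x \<in> B \<and> y \<in> B)"

definition dceq :: "'g \<Rightarrow> 'g \<Rightarrow> bool" where
  "dceq x y \<longleftrightarrow> (\<exists>c\<in>C. \<exists>c'\<in>C. x = c \<otimes> y \<otimes> c')"

lemma opposite_sym: "opposite x y \<longleftrightarrow> opposite y x"
  by (auto simp: opposite_def)

lemma opposite_A_B: "x \<in> A - C \<Longrightarrow> y \<in> B - C \<Longrightarrow> opposite x y"
  by (auto simp: opposite_def C_eq)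

lemma side_mult_C_right: "x \<in> carrier G \<Longrightarrow> c \<in> C \<Longrightarrow> side (x \<otimes> c) = side x"
  using subgroup_mult_right_iff[OF subgroup_A] subgroup_mult_right_iff[OF subgroup_B]
  by (auto simp: side_def C_eq)

lemma side_mult_C_left: "x \<in> carrier G \<Longrightarrow> c \<in> C \<Longrightarrow> side (c \<otimes> x) = side x"
  using subgroup_mult_left_iff[OF subgroup_A] subgroup_mult_left_iff[OF subgroup_B]
  by (auto simp: side_def C_eq)

lemma side_inv: "x \<in> carrier G \<Longrightarrow> side (inv x) = side x"
  using subgroup_inv_iff[OF subgroup_A] subgroup_inv_iff[OF subgroup_B] by (simp add: side_def)

lemma A_minus_C_iff_side: "x \<in> A - C \<longleftrightarrow> side x = (True, False)"
  and B_minus_C_iff_side: "x \<in> B - C \<longleftrightarrow> side x = (False, True)"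
  by (auto simp: side_def C_eq)

lemma inv_A_minus_C: "x \<in> A - C \<Longrightarrow> inv x \<in> A - C"
  and inv_B_minus_C: "y \<in> B - C \<Longrightarrow> inv y \<in> B - C"
proof -
  assume "x \<in> A - C"
  moreover from this have "x \<in> carrier G"
    using A_closed by auto
  ultimately show "inv x \<in> A - C"
    by (simp only: A_minus_C_iff_side side_inv)
next
  assume "y \<in> B - C"
  moreover from this have "y \<in> carrier G"
    using B_closed by auto
  ultimately show "inv y \<in> B - C"
    by (simp only: B_minus_C_iff_side side_inv)
qed

lemma opposite_iff_side:
  "x \<in> (A - C) \<union> (B - C) \<Longrightarrow> y \<in> (A - C) \<union> (B - C) \<Longrightarrow> opposite x y \<longleftrightarrow> side x \<noteq> side y"
  by (auto simp: opposite_def side_def C_eq)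

lemma opposite_side_cong:
  "side x = side x' \<Longrightarrow> side y = side y' \<Longrightarrow> opposite x y \<longleftrightarrow> opposite x' y'"
  by (simp add: side_def opposite_def)

lemma side_mult_same_side:
  assumes "x \<in> (A - C) \<union> (B - C)" "\<not> opposite x y" "x \<otimes> y \<notin> C"
  shows "side (x \<otimes> y) = side x"
  using assms subgroup.m_closed[OF subgroup_A] subgroup.m_closed[OF subgroup_B]
  by (auto simp: opposite_def side_def C_eq)

lemma alternating_iff:
  "alternating A B C xs \<longleftrightarrow> set xs \<subseteq> (A - C) \<union> (B - C) \<and> successively opposite xs"
  unfolding alternating_def opposite_def successively_conv_nth
  by (simp add: subset_code(1) all_set_conv_all_nth)

lemma alternating_Nil [simp]: "alternating A B C []"
  by (simp add: alternating_def)

lemma alternating_singleton [simp]: "alternating A B C [x] \<longleftrightarrow> x \<in> (A - C) \<union> (B - C)"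
  by (simp add: alternating_def)

lemma alternating_closed: "alternating A B C xs \<Longrightarrow> set xs \<subseteq> carrier G"
  using A_closed B_closed by (auto simp: alternating_iff)

lemma alternating_append:
  "alternating A B C (xs @ ys) \<longleftrightarrow> alternating A B C xs \<and> alternating A B C ys \<and>
     (xs = [] \<or> ys = [] \<or> opposite (last xs) (hd ys))"
  by (auto simp: alternating_iff successively_append_iff)

lemma alternating_conv_side:
  "alternating A B C xs \<longleftrightarrow>
     (\<forall>s\<in>set (map side xs). fst s \<noteq> snd s) \<and>
     successively (\<lambda>s t. \<not> (fst s \<and> fst t) \<and> \<not> (snd s \<and> snd t)) (map side xs)"
proof -
  have "set xs \<subseteq> (A - C) \<union> (B - C) \<longleftrightarrow> (\<forall>s\<in>set (map side xs). fst s \<noteq> snd s)"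
    by (auto simp: side_def C_eq)
  moreover have "opposite = (\<lambda>x y. \<not> (x \<in> A \<and> y \<in> A) \<and> \<not> (x \<in> B \<and> y \<in> B))"
    by (simp add: fun_eq_iff opposite_def)
  ultimately show ?thesis
    by (simp add: alternating_iff successively_map side_def)
qed

lemma alternating_side_cong:
  "map side xs = map side ys \<Longrightarrow> alternating A B C xs \<longleftrightarrow> alternating A B C ys"
  by (simp only: alternating_conv_side)

lemma alternating_snoc_side:
  "alternating A B C (xs @ [x]) \<Longrightarrow> side y = side x \<Longrightarrow> alternating A B C (xs @ [y])"
  using alternating_side_cong[of "xs @ [x]" "xs @ [y]"] by simp

lemma alternating_word_inv:
  assumes "set xs \<subseteq> carrier G"
  shows "alternating A B C (word_inv G xs) \<longleftrightarrow> alternating A B C xs"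
proof -
  have "map side (map (\<lambda>x. inv x) xs) = map side xs"
    using assms by (auto simp: side_inv)
  then have "alternating A B C (map (\<lambda>x. inv x) xs) \<longleftrightarrow> alternating A B C xs"
    by (rule alternating_side_cong)
  moreover have "alternating A B C (rev ys) \<longleftrightarrow> alternating A B C ys" for ys
  proof -
    have "(\<lambda>x y. opposite y x) = opposite"
      by (auto simp: fun_eq_iff opposite_def)
    then show ?thesis
      unfolding alternating_iff successively_rev set_rev by metis
  qed
  ultimately show ?thesis
    by (simp add: word_inv_def)
qed

lemma side_dceq: "dceq x y \<Longrightarrow> y \<in> carrier G \<Longrightarrow> side x = side y"
  using C_closed by (auto simp: dceq_def side_mult_C_left side_mult_C_right)

lemma dceq_sym: "dceq x y \<Longrightarrow> y \<in> carrier G \<Longrightarrow> dceq y x"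
proof -
  assume "dceq x y" "y \<in> carrier G"
  then obtain c c' where cc': "c \<in> C" "c' \<in> C" "x = c \<otimes> y \<otimes> c'"
    unfolding dceq_def by blast
  moreover have "c \<in> carrier G" "c' \<in> carrier G"
    using cc' C_closed by auto
  ultimately have "y = inv c \<otimes> x \<otimes> inv c'"
    using \<open>y \<in> carrier G\<close> by (simp add: m_assoc[symmetric]) (simp add: m_assoc)
  with cc' show "dceq y x"
    unfolding dceq_def by (blast intro: inv_in_C)
qed

lemma dceq_inv: "dceq x y \<Longrightarrow> y \<in> carrier G \<Longrightarrow> dceq (inv x) (inv y)"
proof -
  assume "dceq x y" "y \<in> carrier G"
  then obtain c c' where cc': "c \<in> C" "c' \<in> C" "x = c \<otimes> y \<otimes> c'"
    unfolding dceq_def by blast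
  moreover have "c \<in> carrier G" "c' \<in> carrier G"
    using cc' C_closed by auto
  ultimately have "inv x = inv c' \<otimes> inv y \<otimes> inv c"
    using \<open>y \<in> carrier G\<close> by (simp add: inv_mult_group m_assoc)
  with cc' show ?thesis
    unfolding dceq_def by (blast intro: inv_in_C)
qed

lemma alternating_snoc_mult_C:
  assumes "alternating A B C (xs @ [x])" "c \<in> C"
  shows "alternating A B C (xs @ [x \<otimes> c])"
    and "word_eval G (xs @ [x \<otimes> c]) = word_eval G (xs @ [x]) \<otimes> c"
proof -
  have "set xs \<subseteq> carrier G" "x \<in> carrier G" "c \<in> carrier G"
    using alternating_closed[OF assms(1)] assms(2) C_closed by auto
  with assms show "alternating A B C (xs @ [x \<otimes> c])"
    by (auto intro: alternating_snoc_side simp: side_mult_C_right)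
  show "word_eval G (xs @ [x \<otimes> c]) = word_eval G (xs @ [x]) \<otimes> c"
    using \<open>set xs \<subseteq> carrier G\<close> \<open>x \<in> carrier G\<close> \<open>c \<in> carrier G\<close>
    by (simp add: word_eval_append m_assoc word_eval_closed)
qed

lemma opposite_last_reduced_words_neq:
  assumes "alternating A B C xs" "alternating A B C ys" "xs @ ys \<noteq> []"
    and "xs = [] \<or> ys = [] \<or> opposite (last xs) (last ys)"
  shows "word_eval G xs \<noteq> word_eval G ys"
proof
  assume eq: "word_eval G xs = word_eval G ys"
  have closed: "set xs \<subseteq> carrier G" "set ys \<subseteq> carrier G"
    using alternating_closed[OF assms(1)] alternating_closed[OF assms(2)] .
  have "ys \<noteq> [] \<Longrightarrow> last ys \<in> carrier G"
    using closed(2) by auto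
  then have "ys \<noteq> [] \<Longrightarrow> side (hd (word_inv G ys)) = side (last ys)"
    by (simp add: word_inv_def hd_rev last_map side_inv)
  then have "xs = [] \<or> ys = [] \<or> opposite (last xs) (hd (word_inv G ys))"
    using assms(4) opposite_side_cong[OF refl] by metis
  moreover have "alternating A B C (word_inv G ys)"
    using assms(2) closed(2) by (simp add: alternating_word_inv)
  ultimately have "alternating A B C (xs @ word_inv G ys)"
    using assms(1) by (auto simp: alternating_append)
  moreover have "word_eval G (xs @ word_inv G ys) = \<one>"
    using closed eq by (simp add: word_eval_append_word_inv word_eval_closed)
  moreover have "xs @ word_inv G ys \<noteq> []"
    using assms(3) by (simp add: word_inv_def)
  ultimately show False
    using reduced_word_neq_one by blast
qed

lemma reduced_word_in_C:
  assumes "alternating A B C xs" "word_eval G xs \<in> C"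
  shows "xs = []"
proof (rule ccontr)
  assume "xs \<noteq> []"
  then obtain xs' x where xs: "xs = xs' @ [x]"
    by (metis rev_exhaust)
  have c: "inv (word_eval G xs) \<in> C"
    using assms(2) by (rule inv_in_C)
  have "word_eval G xs \<in> carrier G"
    using assms(2) C_closed by auto
  with assms(1) c xs have "alternating A B C (xs' @ [x \<otimes> inv (word_eval G xs)])"
    and "word_eval G (xs' @ [x \<otimes> inv (word_eval G xs)]) = \<one>"
    by (simp_all add: alternating_snoc_mult_C)
  then show False
    using reduced_word_neq_one by blast
qed

lemma reduced_words_last_letter:
  assumes alt_x: "alternating A B C (xs @ [x])" and alt_y: "alternating A B C (ys @ [y])"
    and c: "c \<in> C" and eq: "word_eval G (xs @ [x]) = word_eval G (ys @ [y]) \<otimes> c"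
  shows "y \<otimes> (c \<otimes> inv x) \<in> C"
proof (rule ccontr)
  let ?z = "y \<otimes> (c \<otimes> inv x)"
  assume z: "?z \<notin> C"
  have closed: "set xs \<subseteq> carrier G" "x \<in> carrier G" "set ys \<subseteq> carrier G" "y \<in> carrier G"
    "c \<in> carrier G"
    using alternating_closed[OF alt_x] alternating_closed[OF alt_y] c C_closed by auto
  have alt_xs: "alternating A B C xs" and letters: "x \<in> (A - C) \<union> (B - C)" "y \<in> (A - C) \<union> (B - C)"
    and last_xs: "xs = [] \<or> opposite (last xs) x"
    using alt_x alt_y by (simp_all add: alternating_append)
  have same_side: "side x = side y"
  proof (rule ccontr)
    assume "side x \<noteq> side y"
    then have "opposite x (y \<otimes> c)"
      using letters closed c by (simp add: opposite_side_cong[OF refl side_mult_C_right] opposite_iff_side)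
    with alt_x alt_y c eq show False
      using opposite_last_reduced_words_neq[of "xs @ [x]" "ys @ [y \<otimes> c]"]
      by (simp add: alternating_snoc_mult_C)
  qed
  then have "side (c \<otimes> inv x) = side y"
    using closed c by (simp add: side_mult_C_left side_inv)
  then have "\<not> opposite y (c \<otimes> inv x)"
    using letters(2) by (auto simp: side_def opposite_def C_eq)
  then have side_z: "side ?z = side y"
    using side_mult_same_side[OF letters(2) _ z] by blast
  with alt_y have "alternating A B C (ys @ [?z])"
    by (rule alternating_snoc_side)
  moreover have "xs = [] \<or> opposite (last xs) ?z"
    using last_xs side_z same_side by (auto simp: opposite_side_cong[OF refl, of ?z x])
  moreover have "word_eval G xs = word_eval G (ys @ [?z])"
    using word_eval_snoc_cancel[OF closed eq] closed by (simp add: word_eval_append)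
  ultimately show False
    using opposite_last_reduced_words_neq[of xs "ys @ [?z]"] alt_xs by simp
qed

lemma reduced_words_dceq:
  assumes "alternating A B C xs" "alternating A B C ys" "c \<in> C"
    and "word_eval G xs = word_eval G ys \<otimes> c"
  shows "list_all2 dceq xs ys"
  using assms
proof (induction xs arbitrary: ys c rule: rev_induct)
  case Nil
  have "word_eval G ys \<otimes> c = \<one>" "c \<in> carrier G" "word_eval G ys \<in> carrier G"
    using Nil.prems C_closed alternating_closed[OF Nil.prems(2)] by (auto simp: word_eval_closed)
  then have "word_eval G ys = inv c"
    by (simp add: inv_equality)
  with Nil.prems(2,3) have "ys = []"
    by (simp add: reduced_word_in_C inv_in_C)
  then show ?case
    by simp
next
  case (snoc x xs)
  show ?case
  proof (cases ys rule: rev_exhaust)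
    case Nil
    with snoc.prems have "xs @ [x] = []"
      using C_closed by (intro reduced_word_in_C) auto
    then show ?thesis
      by simp
  next
    case (snoc ys' y)
    have closed: "set xs \<subseteq> carrier G" "x \<in> carrier G" "set ys' \<subseteq> carrier G" "y \<in> carrier G"
      "c \<in> carrier G"
      using alternating_closed[OF snoc.prems(1)] alternating_closed[OF snoc.prems(2)] snoc.prems(3)
        snoc C_closed by auto
    define z where "z = y \<otimes> (c \<otimes> inv x)"
    have z: "z \<in> C"
      using reduced_words_last_letter snoc.prems snoc by (simp add: z_def)
    have "x = inv z \<otimes> y \<otimes> c"
      using closed by (simp add: z_def inv_mult_group m_assoc)
    then have "dceq x y"
      unfolding dceq_def using z snoc.prems(3) by (blast intro: inv_in_C)
    moreover have "list_all2 dceq xs ys'"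
      using snoc.IH z word_eval_snoc_cancel[OF closed] snoc.prems snoc
      by (simp add: alternating_append z_def)
    ultimately show ?thesis
      by (simp add: snoc list_all2_appendI)
  qed
qed

(* A state (xs, c), with xs alternating and c \<in> C, stands for word_eval G xs \<otimes> c; reduce reads
   a word from left to right and keeps a reduced form of the prefix read so far. *)
fun reduce_step :: "'g list \<times> 'g \<Rightarrow> 'g \<Rightarrow> 'g list \<times> 'g" where
  "reduce_step (xs, c) s =
    (let s' = c \<otimes> s in
     if s' \<in> C then (xs, s')
     else if xs = [] \<or> opposite (last xs) s' then (xs @ [s'], \<one>)
     else if last xs \<otimes> s' \<in> C then (butlast xs, last xs \<otimes> s')
     else (butlast xs @ [last xs \<otimes> s'], \<one>))"

definition reduce :: "'g list \<times> 'g \<Rightarrow> 'g list \<Rightarrow> 'g list \<times> 'g" where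
  "reduce st v = fold (\<lambda>s st. reduce_step st s) v st"

lemma reduce_Nil [simp]: "reduce st [] = st"
  by (simp add: reduce_def)

lemma reduce_Cons [simp]: "reduce st (s # v) = reduce (reduce_step st s) v"
  by (simp add: reduce_def)

lemma reduce_append: "reduce st (u @ v) = reduce (reduce st u) v"
  by (simp add: reduce_def)

definition reduced_state :: "'g list \<times> 'g \<Rightarrow> bool" where
  "reduced_state st \<longleftrightarrow> alternating A B C (fst st) \<and> snd st \<in> C"

definition state_value :: "'g list \<times> 'g \<Rightarrow> 'g" where
  "state_value st = word_eval G (fst st) \<otimes> snd st"

lemma state_value_closed: "reduced_state st \<Longrightarrow> state_value st \<in> carrier G"
  using C_closed alternating_closed
  by (auto simp: reduced_state_def state_value_def word_eval_closed)

lemma merge_last_correct: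
  assumes "alternating A B C (xs @ [l])" "\<not> opposite l s" "s \<in> carrier G"
  defines "st \<equiv> if l \<otimes> s \<in> C then (xs, l \<otimes> s) else (xs @ [l \<otimes> s], \<one>)"
  shows "reduced_state st" and "state_value st = word_eval G (xs @ [l]) \<otimes> s"
proof -
  have closed: "set xs \<subseteq> carrier G" "l \<in> carrier G"
    using alternating_closed[OF assms(1)] by auto
  have alt: "alternating A B C xs" and l: "l \<in> (A - C) \<union> (B - C)"
    using assms(1) by (simp_all add: alternating_append)
  have "word_eval G (xs @ [l]) \<otimes> s = word_eval G xs \<otimes> (l \<otimes> s)"
    using closed assms(3) by (simp add: word_eval_append m_assoc word_eval_closed)
  moreover have "l \<otimes> s \<notin> C \<Longrightarrow> alternating A B C (xs @ [l \<otimes> s])"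
    using assms(1) side_mult_same_side[OF l assms(2)] alternating_snoc_side by blast
  ultimately show "reduced_state st" "state_value st = word_eval G (xs @ [l]) \<otimes> s"
    using alt closed assms(3)
    by (simp_all add: st_def reduced_state_def state_value_def word_eval_append word_eval_closed)
qed

lemma reduce_step_correct:
  assumes "reduced_state (xs, c)" "s \<in> A \<union> B"
  shows "reduced_state (reduce_step (xs, c) s) \<and>
    state_value (reduce_step (xs, c) s) = state_value (xs, c) \<otimes> s"
proof -
  have alt: "alternating A B C xs" and c: "c \<in> C"
    using assms(1) by (auto simp: reduced_state_def)
  have closed: "set xs \<subseteq> carrier G" "c \<in> carrier G" "s \<in> carrier G"
    using alternating_closed[OF alt] c C_closed assms(2) A_closed B_closed by auto
  define s' where "s' = c \<otimes> s"
  have s': "s' \<in> carrier G" "side s' = side s"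
    using closed c by (simp_all add: s'_def side_mult_C_left)
  have val: "state_value (xs, c) \<otimes> s = word_eval G xs \<otimes> s'"
    using closed by (simp add: state_value_def s'_def m_assoc word_eval_closed)
  consider (in_C) "s' \<in> C"
    | (append) "s' \<notin> C" "xs = [] \<or> opposite (last xs) s'"
    | (merge) "s' \<notin> C" "xs \<noteq> []" "\<not> opposite (last xs) s'"
    by blast
  then show ?thesis
  proof cases
    case in_C
    with alt val closed show ?thesis
      by (simp add: s'_def[symmetric] reduced_state_def state_value_def)
  next
    case append
    have "s' \<in> (A - C) \<union> (B - C)"
      using s'(2) assms(2) append(1) by (auto simp: side_def)
    with alt append(2) have "alternating A B C (xs @ [s'])"
      by (simp add: alternating_append)
    with append val closed s' show ?thesis
      by (simp add: s'_def[symmetric] reduced_state_def state_value_def word_eval_append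
          word_eval_closed)
  next
    case merge
    then have "alternating A B C (butlast xs @ [last xs])"
      using alt by simp
    from merge_last_correct[OF this merge(3) s'(1)] merge val show ?thesis
      by (simp add: s'_def[symmetric])
  qed
qed

lemma reduce_correct:
  "reduced_state st \<Longrightarrow> set v \<subseteq> A \<union> B \<Longrightarrow>
    reduced_state (reduce st v) \<and> state_value (reduce st v) = state_value st \<otimes> word_eval G v"
proof (induction v arbitrary: st)
  case Nil
  then show ?case by (simp add: state_value_closed)
next
  case (Cons s v)
  obtain xs c where st: "st = (xs, c)"
    by fastforce
  have "s \<in> carrier G" "set v \<subseteq> carrier G"
    using Cons.prems(2) A_closed B_closed by auto
  with Cons reduce_step_correct[of xs c s] st show ?case
    by (simp add: m_assoc state_value_closed word_eval_closed)
qed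

lemma length_reduce: "length (fst (reduce st v)) \<le> length (fst st) + length v"
proof (induction v arbitrary: st)
  case (Cons s v)
  have "length (fst (reduce_step st s)) \<le> Suc (length (fst st))"
    by (cases st) (auto simp: Let_def)
  with Cons.IH[of "reduce_step st s"] show ?case
    by simp
qed simp

lemma reduce_dceq_reduced_word:
  assumes "alternating A B C ws" "set v \<subseteq> A \<union> B" "word_eval G v = word_eval G ws"
  shows "list_all2 dceq (fst (reduce ([], \<one>) v)) ws"
proof -
  obtain xs c where st: "reduce ([], \<one>) v = (xs, c)"
    by fastforce
  have "reduced_state ([], \<one>)"
    by (simp add: reduced_state_def)
  from reduce_correct[OF this assms(2)] st
  have "reduced_state (xs, c)" and val: "state_value (xs, c) = state_value ([], \<one>) \<otimes> word_eval G v"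
    by simp_all
  then have alt: "alternating A B C xs" and c: "c \<in> C"
    by (simp_all add: reduced_state_def)
  have "set v \<subseteq> carrier G"
    using assms(2) A_closed B_closed by auto
  with val have val: "word_eval G xs \<otimes> c = word_eval G v"
    by (simp add: state_value_def word_eval_closed)
  have "c \<in> carrier G"
    using c C_closed by auto
  then have "word_eval G xs = word_eval G xs \<otimes> c \<otimes> inv c"
    using alternating_closed[OF alt] by (simp add: m_assoc word_eval_closed)
  with val assms(3) have "word_eval G xs = word_eval G ws \<otimes> inv c"
    by simp
  from reduced_words_dceq[OF alt assms(1) inv_in_C[OF c] this] st show ?thesis
    by simp
qed

lemma reduced_word_length_le:
  assumes "alternating A B C ws" "set v \<subseteq> A \<union> B" "word_eval G v = word_eval G ws"
  shows "length ws \<le> length v"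
  using list_all2_lengthD[OF reduce_dceq_reduced_word[OF assms]] length_reduce[of "([], \<one>)" v]
  by simp

lemma word_length_reduced:
  assumes "alternating A B C ws"
  shows "word_length G ((A \<union> B) - {\<one>}) (word_eval G ws) = length ws"
  unfolding word_length_def
proof (rule Least_equality)
  have "set ws \<subseteq> (A \<union> B) - {\<one>}"
    using assms one_in_C by (auto simp: alternating_iff simp del: one_in_C)
  then show "\<exists>u. set u \<subseteq> (A \<union> B) - {\<one>} \<and> length u = length ws \<and> word_eval G u = word_eval G ws"
    by blast
next
  fix n assume "\<exists>u. set u \<subseteq> (A \<union> B) - {\<one>} \<and> length u = n \<and> word_eval G u = word_eval G ws"
  then show "length ws \<le> n"
    using reduced_word_length_le[OF assms] by blast
qed

lemma weight_reduce:
  assumes "T \<noteq> []"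
  shows "weight T (fst (reduce st v)) \<le> weight T (fst st) + length v"
proof (induction v arbitrary: st)
  case (Cons s v)
  have "weight T (butlast xs @ [x]) \<le> weight T xs + 1" for xs :: "'g list" and x
    using weight_snoc_le[OF assms, of "butlast xs" x] weight_butlast_le[OF assms, of xs] by simp
  then have "weight T (fst (reduce_step st s)) \<le> weight T (fst st) + 1"
    using weight_snoc_le[OF assms] weight_butlast_le[OF assms]
    by (cases st) (auto simp: Let_def add_increasing2)
  with Cons.IH[of "reduce_step st s"] show ?case
    by simp
qed simp

lemma reduce_alternating:
  "alternating A B C (x # ys) \<Longrightarrow> reduce (xs @ [x], \<one>) ys = (xs @ x # ys, \<one>)"
proof (induction ys arbitrary: xs x)
  case (Cons y ys)
  then have "y \<in> (A - C) \<union> (B - C)" "opposite x y" "alternating A B C (y # ys)"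
    by (auto simp: alternating_iff)
  then have "reduce_step (xs @ [x], \<one>) y = ((xs @ [x]) @ [y], \<one>)"
    using A_closed B_closed by auto
  with Cons.IH[where xs = "xs @ [x]" and x = y] \<open>alternating A B C (y # ys)\<close> show ?case
    by simp
qed simp

lemma weight_reduce_step_absorb:
  assumes "T \<noteq> []" "c \<otimes> y \<notin> C" "xs \<noteq> []" "\<not> opposite (last xs) (c \<otimes> y)" "last xs \<noteq> last T"
  shows "weight T (fst (reduce_step (xs, c) y)) \<le> weight T xs"
proof -
  have "weight T (butlast xs) < weight T xs"
    using assms(1,3,5) by (rule weight_butlast_less)
  moreover have "weight T (butlast xs @ [last xs \<otimes> (c \<otimes> y)]) \<le> weight T (butlast xs) + 1"
    using assms(1) by (rule weight_snoc_le)
  ultimately show ?thesis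
    using assms(2-4) by (simp add: Let_def)
qed

(* Reading y either absorbs it into the last letter of the stack, which does not increase the
   weight, or pushes y and then all of T, which creates a new occurrence of T. *)
lemma weight_reduce_occurrence:
  assumes "reduced_state st" "alternating A B C (y # T)" "T \<noteq> []" "opposite y (last T)"
  shows "weight T (fst (reduce st (y # T))) < weight T (fst st) + length (y # T)"
proof (cases st)
  case (Pair xs c)
  have c: "c \<in> C"
    using assms(1) Pair by (simp add: reduced_state_def)
  have y: "y \<in> carrier G" "y \<in> (A - C) \<union> (B - C)"
    using assms(2) alternating_closed[OF assms(2)] by (auto simp: alternating_iff)
  define y' where "y' = c \<otimes> y"
  have side_y': "side y' = side y"
    using y c by (simp add: y'_def side_mult_C_left)
  then have "y' \<notin> C"
    using y(2) by (auto simp: side_def C_eq)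
  show ?thesis
  proof (cases "xs = [] \<or> opposite (last xs) y'")
    case True
    with \<open>y' \<notin> C\<close> have step: "reduce_step (xs, c) y = (xs @ [y'], \<one>)"
      by (simp add: y'_def[symmetric])
    have "alternating A B C (y' # T)"
      using assms(2) side_y' alternating_side_cong[of "y' # T" "y # T"] by simp
    then have "reduce (xs @ [y'], \<one>) T = (xs @ y' # T, \<one>)"
      by (rule reduce_alternating)
    with step Pair have "fst (reduce st (y # T)) = xs @ [y'] @ T"
      by simp
    with weight_append_occurrence[OF assms(3), of xs "[y']"] Pair show ?thesis
      by simp
  next
    case False
    then have "xs \<noteq> []" and not_opp: "\<not> opposite (last xs) y'"
      by auto
    have "opposite y' (last T)"
      using assms(4) side_y' opposite_side_cong[OF _ refl] by blast
    with not_opp have "last xs \<noteq> last T"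
      by (auto simp: opposite_sym)
    with assms(3) \<open>y' \<notin> C\<close> \<open>xs \<noteq> []\<close> not_opp
    have "weight T (fst (reduce_step (xs, c) y)) \<le> weight T xs"
      unfolding y'_def by (rule weight_reduce_step_absorb)
    moreover have "weight T (fst (reduce (reduce_step (xs, c) y) T))
        \<le> weight T (fst (reduce_step (xs, c) y)) + length T"
      by (rule weight_reduce[OF assms(3)])
    ultimately show ?thesis
      using Pair by simp
  qed
qed

lemma weight_reduce_occurrences:
  assumes "reduced_state st" "set v \<subseteq> A \<union> B" "occurrences (y # T) v ps"
    and "alternating A B C (y # T)" "T \<noteq> []" "opposite y (last T)"
  shows "weight T (fst (reduce st v)) + length ps \<le> weight T (fst st) + length v"
  using assms(2,3)
proof (induction ps arbitrary: v rule: rev_induct)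
  case Nil
  then show ?case
    using weight_reduce[OF assms(5)] by simp
next
  case (snoc p ps)
  define v\<^sub>1 v\<^sub>2 where "v\<^sub>1 = take p v" and "v\<^sub>2 = drop (p + length (y # T)) v"
  have v: "v = v\<^sub>1 @ (y # T) @ v\<^sub>2" and occ: "occurrences (y # T) v\<^sub>1 ps"
    using occurrences_snocD[OF snoc.prems(2)] by (simp_all add: v\<^sub>1_def v\<^sub>2_def)
  have v\<^sub>1: "set v\<^sub>1 \<subseteq> A \<union> B"
    using snoc.prems(1) v by auto
  define st\<^sub>1 where "st\<^sub>1 = reduce st v\<^sub>1"
  define st\<^sub>2 where "st\<^sub>2 = reduce st\<^sub>1 (y # T)"
  have "weight T (fst st\<^sub>1) + length ps \<le> weight T (fst st) + length v\<^sub>1"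
    using snoc.IH[OF v\<^sub>1 occ] by (simp add: st\<^sub>1_def)
  moreover have "weight T (fst st\<^sub>2) < weight T (fst st\<^sub>1) + length (y # T)"
    using reduce_correct[OF assms(1) v\<^sub>1] assms(4-6)
    unfolding st\<^sub>1_def st\<^sub>2_def by (intro weight_reduce_occurrence) simp_all
  moreover have "weight T (fst (reduce st\<^sub>2 v\<^sub>2)) \<le> weight T (fst st\<^sub>2) + length v\<^sub>2"
    by (rule weight_reduce[OF assms(5)])
  moreover have "reduce st v = reduce st\<^sub>2 v\<^sub>2"
    using v by (simp add: reduce_append st\<^sub>1_def st\<^sub>2_def)
  ultimately show ?case
    using v by simp
qed

definition dc_occurs :: "'g list \<Rightarrow> 'g list \<Rightarrow> bool" where
  "dc_occurs T ws \<longleftrightarrow> (\<exists>q. q + length T \<le> length ws \<and> (\<forall>k<length T. dceq (T ! k) (ws ! (q + k))))"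

lemma occ_count_eq_0_if_not_dc_occurs:
  assumes "list_all2 dceq xs ws" "T \<noteq> []" "\<not> dc_occurs T ws"
  shows "occ_count T xs = 0"
proof (rule ccontr)
  assume "occ_count T xs \<noteq> 0"
  then obtain u u' where xs: "xs = u @ T @ u'"
    using occ_count_pos_obtain[OF assms(2)] by blast
  have "length u + length T \<le> length ws"
    using list_all2_lengthD[OF assms(1)] xs by simp
  moreover have "dceq (T ! k) (ws ! (length u + k))" if "k < length T" for k
    using list_all2_nthD[OF assms(1), of "length u + k"] xs that by (simp add: nth_append)
  ultimately show False
    using assms(3) unfolding dc_occurs_def by blast
qed

lemma cw_wpow:
  assumes "alternating A B C (wpow w n)" "w \<noteq> []"
  shows "cw G ((A \<union> B) - {\<one>}) w (word_eval G (wpow w n)) = int n"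
proof -
  let ?S = "(A \<union> B) - {\<one>}"
  have S: "set (wpow w n) \<subseteq> ?S"
    using assms(1) by (auto simp: alternating_iff)
  have "n * length w - n \<le> length v - occ_count w v"
    if "set v \<subseteq> ?S" "word_eval G v = word_eval G (wpow w n)" for v
  proof -
    have "n * length w \<le> length v"
      using reduced_word_length_le[OF assms(1)] that by auto
    moreover have "occ_count w v * length w \<le> length v"
      by (rule occ_count_le_length[OF assms(2)])
    ultimately show ?thesis
      by (rule diff_le_diff_of_mult_le)
  qed
  then have "cw G ?S w (word_eval G (wpow w n)) = int (length (wpow w n)) - int (n * length w - n)"
    by (intro cw_eqI[OF word_length_reduced[OF assms(1)] S refl])
      (simp_all add: occ_count_wpow[OF assms(2)])
  moreover have "n \<le> n * length w"
    using assms(2) by (simp add: Suc_le_eq)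
  ultimately show ?thesis
    by simp
qed

lemma length_add_occ_count_le:
  assumes "alternating A B C ws" "alternating A B C (y # T)" "T \<noteq> []" "opposite y (last T)"
    and "\<not> dc_occurs T ws" "set v \<subseteq> A \<union> B" "word_eval G v = word_eval G ws"
  shows "length ws + occ_count (y # T) v \<le> length v"
proof -
  obtain ps where ps: "occurrences (y # T) v ps" "length ps = occ_count (y # T) v"
    using occ_count_obtain by blast
  let ?xs = "fst (reduce ([], \<one>) v)"
  have "list_all2 dceq ?xs ws"
    using assms(1,6,7) by (rule reduce_dceq_reduced_word)
  then have "weight T ?xs = int (length ws)"
    using occ_count_eq_0_if_not_dc_occurs[OF _ assms(3,5)]
    by (simp add: weight_def list_all2_lengthD)
  moreover have "weight T ?xs + length ps \<le> weight T [] + length v"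
    using weight_reduce_occurrences[of "([], \<one>)" v y T ps] assms(2-4,6) ps(1)
    by (simp add: reduced_state_def)
  ultimately show ?thesis
    using ps(2) by (simp add: weight_def)
qed

lemma cw_eq_0:
  assumes "alternating A B C ws" "alternating A B C w" "2 \<le> length w"
    and "opposite (hd w) (last w)" "\<not> dc_occurs (tl w) ws"
  shows "cw G ((A \<union> B) - {\<one>}) w (word_eval G ws) = 0"
proof -
  let ?S = "(A \<union> B) - {\<one>}"
  obtain y T where w: "w = y # T" and "T \<noteq> []"
    using assms(3) by (cases w; cases "tl w") auto
  have bound: "length ws + occ_count w v \<le> length v"
    if "set v \<subseteq> ?S" "word_eval G v = word_eval G ws" for v
    using length_add_occ_count_le[of ws y T v] assms that w \<open>T \<noteq> []\<close> by auto
  have S: "set ws \<subseteq> ?S"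
    using assms(1) by (auto simp: alternating_iff)
  with bound[of ws] have "length ws - occ_count w ws = length ws"
    by simp
  moreover have "length ws \<le> length v - occ_count w v"
    if "set v \<subseteq> ?S" "word_eval G v = word_eval G ws" for v
    using bound[OF that] by simp
  ultimately have "cw G ?S w (word_eval G ws) = int (length ws) - int (length ws)"
    by (intro cw_eqI[OF word_length_reduced[OF assms(1)] S refl])
  then show ?thesis
    by simp
qed

end

section \<open>The words w_i\<close>

lemma splice_append:
  "length xs = length ys \<Longrightarrow> splice (xs @ xs') (ys @ ys') = splice xs ys @ splice xs' ys'"
  by (induction xs ys rule: list_induct2) auto

lemma splice_nth:
  assumes "length xs = length ys" "h < length xs"
  shows "splice xs ys ! (2 * h) = xs ! h" and "splice xs ys ! Suc (2 * h) = ys ! h"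
  using assms
proof (induction xs ys arbitrary: h rule: list_induct2)
  case (Cons x xs y ys)
  case 1 then show ?case using Cons by (cases h) auto
next
  case (Cons x xs y ys)
  case 2 then show ?case using Cons by (cases h) auto
qed auto

lemma wpow_pair: "wpow [x, y] n = splice (replicate n x) (replicate n y)"
  by (induction n) auto

lemma wpow_splice:
  "length xs = length ys \<Longrightarrow> wpow (splice xs ys) n = splice (wpow xs n) (wpow ys n)"
  by (induction n) (auto simp: splice_append)

lemma exists_shift_mod:
  fixes P :: nat
  assumes "0 < P" "c < P"
  obtains r where "R \<le> r" "r < R + P" "(s + r) mod P = c"
proof -
  define d where "d = (s + R) mod P"
  define x where "x = (c + P - d) mod P"
  have "d < P"
    using assms(1) by (simp add: d_def)
  have "(s + (R + x)) mod P = (d + x) mod P"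
    by (simp add: d_def add.assoc[symmetric] mod_add_left_eq)
  also have "\<dots> = (d + (c + P - d)) mod P"
    by (simp add: x_def mod_add_right_eq)
  also have "\<dots> = c"
    using \<open>d < P\<close> assms(2) by simp
  finally show ?thesis
    using that[of "R + x"] assms(1) by (simp add: x_def)
qed

lemma mod_reverse_shift:
  fixes m :: nat
  assumes "j < m" "t < m" "s mod m + m = t + j + 1 \<or> s mod m = t + j + 1"
  shows "(s + (m - 1 - j)) mod m = t"
proof -
  have "(s + (m - 1 - j)) mod m = (s mod m + (m - 1 - j)) mod m"
    by (simp add: mod_add_left_eq)
  also from assms(3) have "\<dots> = t"
  proof
    assume "s mod m + m = t + j + 1"
    then have "s mod m + (m - 1 - j) = t"
      using assms(1) by linarith
    then show ?thesis
      using assms(2) by simp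
  next
    assume "s mod m = t + j + 1"
    then have "s mod m + (m - 1 - j) = t + m"
      using assms(1) by linarith
    then show ?thesis
      using assms(2) by simp
  qed
  finally show ?thesis .
qed

context amalgam
begin

lemma alternating_splice:
  "length xs = length ys \<Longrightarrow> set xs \<subseteq> A - C \<Longrightarrow> set ys \<subseteq> B - C \<Longrightarrow>
    alternating A B C (splice xs ys)"
proof (induction xs ys rule: list_induct2)
  case (Cons x xs y ys)
  have "splice (x # xs) (y # ys) = [x, y] @ splice xs ys"
    by simp
  moreover have "alternating A B C [x, y]"
    using Cons.prems unfolding alternating_iff by (auto simp: opposite_def C_eq)
  moreover have "splice xs ys = [] \<or> opposite y (hd (splice xs ys))"
    using Cons by (cases xs) (auto simp: opposite_def C_eq)
  ultimately show ?case
    using Cons by (simp only: alternating_append) simp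
qed simp

lemma dceq_splice_nth:
  assumes "length us = length vs" "set vs \<subseteq> B - C" "x \<in> A - C"
    and "m < length (splice us vs)" "dceq x (splice us vs ! m)"
  shows "dceq x (us ! (m div 2))"
proof (cases "even m")
  case True
  with assms show ?thesis
    by (auto simp: splice_nth(1)[symmetric] elim!: evenE)
next
  case False
  then obtain h where m: "m = Suc (2 * h)"
    by (metis oddE Suc_eq_plus1)
  with assms(1,4) have "splice us vs ! m = vs ! h" "h < length vs"
    by (simp_all add: splice_nth)
  with assms(2) have "splice us vs ! m \<in> B - C"
    by (metis nth_mem subsetD)
  moreover have "side x = side (splice us vs ! m)"
    using assms(5) \<open>splice us vs ! m \<in> B - C\<close> B_closed by (intro side_dceq) auto
  ultimately show ?thesis
    using assms(3) unfolding A_minus_C_iff_side B_minus_C_iff_side by simp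
qed

end

locale amalgam_letters = amalgam G A B C
  for G :: "('g, 'b) monoid_scheme" (structure) and A B C +
  fixes a\<^sub>1 a\<^sub>2 b :: 'g
  assumes a\<^sub>1: "a\<^sub>1 \<in> A - C" and a\<^sub>2: "a\<^sub>2 \<in> A - C" and b: "b \<in> B - C"
    and a\<^sub>2_not_dceq: "\<not> dceq a\<^sub>2 a\<^sub>1"
begin

definition A_letters :: "nat \<Rightarrow> 'g list" where
  "A_letters N = replicate N a\<^sub>1 @ replicate N (inv a\<^sub>1) @ replicate N a\<^sub>2 @ replicate N (inv a\<^sub>2) @
     replicate (4 * N) a\<^sub>1 @ replicate (4 * N) (inv a\<^sub>1) @
     replicate (4 * N) a\<^sub>2 @ replicate (4 * N) (inv a\<^sub>2)"

definition B_letters :: "nat \<Rightarrow> 'g list" where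
  "B_letters N = replicate N b @ replicate N (inv b) @ replicate N b @ replicate N (inv b) @
     replicate (4 * N) b @ replicate (4 * N) (inv b) @ replicate (4 * N) b @ replicate (4 * N) (inv b)"

definition word :: "nat \<Rightarrow> 'g list" where
  "word N = splice (A_letters N) (B_letters N)"

lemma w_word_eq_word: "w_word G a\<^sub>1 a\<^sub>2 b i = word (10 ^ i)"
  by (simp add: w_word_def Let_def word_def A_letters_def B_letters_def wpow_pair splice_append)

lemma length_A_letters [simp]: "length (A_letters N) = 20 * N"
  and length_B_letters [simp]: "length (B_letters N) = 20 * N"
  and length_word [simp]: "length (word N) = 40 * N"
  by (simp_all add: A_letters_def B_letters_def word_def)

lemma letters_closed: "a\<^sub>1 \<in> carrier G" "a\<^sub>2 \<in> carrier G" "b \<in> carrier G"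
  using a\<^sub>1 a\<^sub>2 b A_closed B_closed by auto

lemma set_A_letters: "set (A_letters N) \<subseteq> A - C"
  and set_B_letters: "set (B_letters N) \<subseteq> B - C"
  using a\<^sub>1 a\<^sub>2 b inv_A_minus_C[OF a\<^sub>1] inv_A_minus_C[OF a\<^sub>2] inv_B_minus_C[OF b]
  by (simp_all add: A_letters_def B_letters_def set_replicate_conv_if)

lemma A_letters_nth:
  "r < 20 * N \<Longrightarrow> A_letters N ! r =
    (if r < N then a\<^sub>1 else if r < 2 * N then inv a\<^sub>1 else if r < 3 * N then a\<^sub>2
     else if r < 4 * N then inv a\<^sub>2 else if r < 8 * N then a\<^sub>1 else if r < 12 * N then inv a\<^sub>1
     else if r < 16 * N then a\<^sub>2 else inv a\<^sub>2)"
proof -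
  assume r: "r < 20 * N"
  consider "r < N" | "N \<le> r" "r < 2 * N" | "2 * N \<le> r" "r < 3 * N" | "3 * N \<le> r" "r < 4 * N"
    | "4 * N \<le> r" "r < 8 * N" | "8 * N \<le> r" "r < 12 * N" | "12 * N \<le> r" "r < 16 * N"
    | "16 * N \<le> r"
    by linarith
  then show ?thesis
    by cases (use r in \<open>auto simp: A_letters_def nth_append\<close>)
qed

lemma A_letters_block:
  "r < N \<Longrightarrow> A_letters N ! r = a\<^sub>1"
  "N \<le> r \<Longrightarrow> r < 2 * N \<Longrightarrow> A_letters N ! r = inv a\<^sub>1"
  "2 * N \<le> r \<Longrightarrow> r < 3 * N \<Longrightarrow> A_letters N ! r = a\<^sub>2"
  "3 * N \<le> r \<Longrightarrow> r < 4 * N \<Longrightarrow> A_letters N ! r = inv a\<^sub>2"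
  "4 * N \<le> r \<Longrightarrow> r < 8 * N \<Longrightarrow> A_letters N ! r = a\<^sub>1"
  "8 * N \<le> r \<Longrightarrow> r < 12 * N \<Longrightarrow> A_letters N ! r = inv a\<^sub>1"
  "12 * N \<le> r \<Longrightarrow> r < 16 * N \<Longrightarrow> A_letters N ! r = a\<^sub>2"
  "16 * N \<le> r \<Longrightarrow> r < 20 * N \<Longrightarrow> A_letters N ! r = inv a\<^sub>2"
  by (simp_all add: A_letters_nth)

lemma A_letters_nth_mem: "r < 20 * N \<Longrightarrow> A_letters N ! r \<in> A - C"
  using set_A_letters nth_mem by (metis length_A_letters subsetD)

lemma letters_not_dceq:
  "\<not> dceq a\<^sub>2 a\<^sub>1" "\<not> dceq a\<^sub>1 a\<^sub>2" "\<not> dceq (inv a\<^sub>1) (inv a\<^sub>2)" "\<not> dceq (inv a\<^sub>2) (inv a\<^sub>1)"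
  using a\<^sub>2_not_dceq letters_closed dceq_sym dceq_inv inv_closed inv_inv by metis+

lemma alternating_wpow_word: "alternating A B C (wpow (word N) n)"
  unfolding word_def
  by (simp add: wpow_splice alternating_splice set_A_letters set_B_letters
      order_trans[OF set_wpow])

lemma word_nth_even: "r < 20 * N \<Longrightarrow> word N ! (2 * r) = A_letters N ! r"
  by (simp add: word_def splice_nth)

lemma alternating_word: "alternating A B C (word N)"
  using alternating_wpow_word[of N 1] by simp

lemma word_not_Nil: "1 \<le> N \<Longrightarrow> word N \<noteq> []"
  using length_word[of N] by (cases "word N") auto

lemma hd_word: "1 \<le> N \<Longrightarrow> hd (word N) = a\<^sub>1"
  using word_nth_even[of 0 N] word_not_Nil[of N] A_letters_block(1)[of 0 N] by (simp add: hd_conv_nth)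

lemma last_word: "1 \<le> N \<Longrightarrow> last (word N) = inv b"
proof -
  assume N: "1 \<le> N"
  have "last (B_letters N) = inv b" "B_letters N \<noteq> []"
    using N by (simp_all add: B_letters_def)
  then have "B_letters N ! (20 * N - 1) = inv b"
    by (simp add: last_conv_nth)
  moreover have "length (word N) - 1 = Suc (2 * (20 * N - 1))"
    using N by simp
  then have "last (word N) = word N ! Suc (2 * (20 * N - 1))"
    using word_not_Nil[OF N] by (simp add: last_conv_nth)
  moreover have "word N ! Suc (2 * (20 * N - 1)) = B_letters N ! (20 * N - 1)"
    using N unfolding word_def by (intro splice_nth(2)) simp_all
  ultimately show ?thesis
    by simp
qed

lemma dceq_wpow_word_nth:
  assumes "x \<in> A - C" "m < n * (40 * N)" "dceq x (wpow (word N) n ! m)"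
  shows "dceq x (A_letters N ! ((m div 2) mod (20 * N)))"
proof -
  have "dceq x (wpow (A_letters N) n ! (m div 2))"
  proof (rule dceq_splice_nth)
    show "length (wpow (A_letters N) n) = length (wpow (B_letters N) n)"
      by simp
    show "set (wpow (B_letters N) n) \<subseteq> B - C"
      using set_wpow set_B_letters by (rule order_trans)
    show "x \<in> A - C"
      by (fact assms(1))
    show "m < length (splice (wpow (A_letters N) n) (wpow (B_letters N) n))"
      using assms(2) by (simp add: algebra_simps)
    show "dceq x (splice (wpow (A_letters N) n) (wpow (B_letters N) n) ! m)"
      using assms(3) by (simp add: word_def wpow_splice)
  qed
  moreover have "m div 2 < n * (20 * N)"
    using assms(2) by (simp add: algebra_simps)
  ultimately show ?thesis
    by (simp add: wpow_nth)
qed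

lemma no_shifted_match_tl:
  assumes "1 \<le> N" "10 * N \<le> N'"
  shows "\<not> (\<forall>r < 20 * N' - 1. dceq (A_letters N' ! Suc r) (A_letters N ! ((s + r) mod (20 * N))))"
proof
  assume match: "\<forall>r < 20 * N' - 1. dceq (A_letters N' ! Suc r) (A_letters N ! ((s + r) mod (20 * N)))"
  obtain r where r: "4 * N' \<le> r" "r < 4 * N' + 20 * N" "(s + r) mod (20 * N) = 2 * N"
    using exists_shift_mod[of "20 * N" "2 * N" "4 * N'" s] assms(1) by auto
  have "r < 20 * N' - 1"
    using r assms by linarith
  with match[rule_format, of r] r(3) have "dceq (A_letters N' ! Suc r) (A_letters N ! (2 * N))"
    by simp
  moreover have "A_letters N' ! Suc r = a\<^sub>1"
    using r assms by (intro A_letters_block(5)) linarith+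
  moreover have "A_letters N ! (2 * N) = a\<^sub>2"
    using assms by (intro A_letters_block(3)) linarith+
  ultimately show False
    using letters_not_dceq by simp
qed

lemma no_shifted_match_reverse_long:
  assumes "1 \<le> N" "10 * N \<le> N'"
  shows "\<not> (\<forall>r < 20 * N'.
    dceq (inv (A_letters N' ! (20 * N' - 1 - r))) (A_letters N ! ((s + r) mod (20 * N))))"
proof
  assume match: "\<forall>r < 20 * N'.
    dceq (inv (A_letters N' ! (20 * N' - 1 - r))) (A_letters N ! ((s + r) mod (20 * N)))"
  obtain r where r: "r < 20 * N" "(s + r) mod (20 * N) = 0"
    using exists_shift_mod[of "20 * N" 0 0 s] assms(1) by auto
  have "r < 20 * N'"
    using r assms by linarith
  with match[rule_format, of r] r(2)
  have "dceq (inv (A_letters N' ! (20 * N' - 1 - r))) (A_letters N ! 0)"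
    by simp
  moreover have "A_letters N' ! (20 * N' - 1 - r) = inv a\<^sub>2"
    using r assms by (intro A_letters_block(8)) linarith+
  moreover have "A_letters N ! 0 = a\<^sub>1"
    using assms by (intro A_letters_block(1)) linarith
  ultimately show False
    using letters_not_dceq letters_closed by simp
qed

(* In each case one position pairs a1 with a2 or a1^-1 with a2^-1, the only pairs known to lie
   in different double cosets. *)
lemma no_reverse_pairing:
  assumes "1 \<le> N" "u < 20 * N"
  shows "\<not> (\<forall>j t. j < 20 * N \<longrightarrow> t < 20 * N \<longrightarrow> (u + 20 * N = t + j + 1 \<or> u = t + j + 1) \<longrightarrow>
    dceq (inv (A_letters N ! j)) (A_letters N ! t))"
proof
  assume pair: "\<forall>j t. j < 20 * N \<longrightarrow> t < 20 * N \<longrightarrow> (u + 20 * N = t + j + 1 \<or> u = t + j + 1) \<longrightarrow>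
    dceq (inv (A_letters N ! j)) (A_letters N ! t)"
  have no_pair: False
    if "j < 20 * N" "t < 20 * N" "u + 20 * N = t + j + 1 \<or> u = t + j + 1"
      "A_letters N ! j = x" "A_letters N ! t = y" "\<not> dceq (inv x) y" for j t x y
    using pair that by blast
  note not_dceq = letters_not_dceq inv_inv[OF letters_closed(1)] inv_inv[OF letters_closed(2)]
  consider "u < N"
    | "N \<le> u" "u < 4 * N"
    | "4 * N \<le> u" "u < 8 * N"
    | "8 * N \<le> u" "u < 11 * N"
    | "11 * N \<le> u" "u < 14 * N"
    | "14 * N \<le> u" "u < 17 * N"
    | "17 * N \<le> u"
    using assms(2) by linarith
  then show False
  proof cases
    case 1
    show False
      by (rule no_pair[of "20 * N - 1" "u" "inv a\<^sub>2" a\<^sub>1])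
        (use 1 assms not_dceq in \<open>(intro A_letters_block; linarith) | linarith | simp\<close>)+
  next
    case 2
    show False
      by (rule no_pair[of "16 * N - 1 + u" "4 * N" "inv a\<^sub>2" a\<^sub>1])
        (use 2 assms not_dceq in \<open>(intro A_letters_block; linarith) | linarith | simp\<close>)+
  next
    case 3
    show False
      by (rule no_pair[of "20 * N - 1" "u" "inv a\<^sub>2" a\<^sub>1])
        (use 3 assms not_dceq in \<open>(intro A_letters_block; linarith) | linarith | simp\<close>)+
  next
    case 4
    show False
      by (rule no_pair[of "u - 3 * N - 1" "3 * N" "a\<^sub>1" "inv a\<^sub>2"])
        (use 4 assms not_dceq in \<open>(intro A_letters_block; linarith) | linarith | simp\<close>)+
  next
    case 5
    show False
      by (rule no_pair[of "u - 2 * N - 1" "2 * N" "inv a\<^sub>1" a\<^sub>2])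
        (use 5 assms not_dceq in \<open>(intro A_letters_block; linarith) | linarith | simp\<close>)+
  next
    case 6
    show False
      by (rule no_pair[of "u - N - 1" "N" "a\<^sub>2" "inv a\<^sub>1"])
        (use 6 assms not_dceq in \<open>(intro A_letters_block; linarith) | linarith | simp\<close>)+
  next
    case 7
    show False
      by (rule no_pair[of "u - 1" "0" "inv a\<^sub>2" a\<^sub>1])
        (use 7 assms not_dceq in \<open>(intro A_letters_block; linarith) | linarith | simp\<close>)+
  qed
qed

lemma no_shifted_match_reverse_self:
  assumes "1 \<le> N"
  shows "\<not> (\<forall>r < 20 * N.
    dceq (inv (A_letters N ! (20 * N - 1 - r))) (A_letters N ! ((s + r) mod (20 * N))))"
proof
  assume match: "\<forall>r < 20 * N.
    dceq (inv (A_letters N ! (20 * N - 1 - r))) (A_letters N ! ((s + r) mod (20 * N)))"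
  have "dceq (inv (A_letters N ! j)) (A_letters N ! t)"
    if "j < 20 * N" "t < 20 * N" "s mod (20 * N) + 20 * N = t + j + 1 \<or> s mod (20 * N) = t + j + 1"
    for j t
    using match[rule_format, of "20 * N - 1 - j"] mod_reverse_shift[OF that] that(1) by simp
  with no_reverse_pairing[OF assms, of "s mod (20 * N)"] assms show False
    by simp
qed

lemma not_dc_occurs_tl_word:
  assumes "1 \<le> N" "10 * N \<le> N'"
  shows "\<not> dc_occurs (tl (word N')) (wpow (word N) n)"
proof
  assume "dc_occurs (tl (word N')) (wpow (word N) n)"
  then obtain q where q: "q + (40 * N' - 1) \<le> n * (40 * N)"
    and occ: "\<And>k. k < 40 * N' - 1 \<Longrightarrow> dceq (word N' ! Suc k) (wpow (word N) n ! (q + k))"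
    by (auto simp: dc_occurs_def nth_tl)
  have "dceq (A_letters N' ! Suc r) (A_letters N ! ((Suc q div 2 + r) mod (20 * N)))"
    if "r < 20 * N' - 1" for r
  proof -
    have "word N' ! Suc (Suc (2 * r)) = A_letters N' ! Suc r"
      using word_nth_even[of "Suc r" N'] that by simp
    moreover have "A_letters N' ! Suc r \<in> A - C"
      using that by (intro A_letters_nth_mem) linarith
    moreover have "q + Suc (2 * r) < n * (40 * N)" "Suc (2 * r) < 40 * N' - 1"
      using q that by linarith+
    ultimately have "dceq (A_letters N' ! Suc r) (A_letters N ! (((q + Suc (2 * r)) div 2) mod (20 * N)))"
      using occ[of "Suc (2 * r)"] by (intro dceq_wpow_word_nth) simp_all
    moreover have "(q + Suc (2 * r)) div 2 = Suc q div 2 + r"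
      by simp
    ultimately show ?thesis
      by simp
  qed
  with no_shifted_match_tl[OF assms] show False
    by blast
qed

lemma not_dc_occurs_tl_word_inv:
  assumes "1 \<le> N" "N' = N \<or> 10 * N \<le> N'"
  shows "\<not> dc_occurs (tl (word_inv G (word N'))) (wpow (word N) n)"
proof
  assume "dc_occurs (tl (word_inv G (word N'))) (wpow (word N) n)"
  then obtain q where q: "q + (40 * N' - 1) \<le> n * (40 * N)"
    and occ: "\<And>k. k < 40 * N' - 1 \<Longrightarrow>
      dceq (word_inv G (word N') ! Suc k) (wpow (word N) n ! (q + k))"
    by (auto simp: dc_occurs_def nth_tl)
  have "1 \<le> N'"
    using assms by auto
  have "dceq (inv (A_letters N' ! (20 * N' - 1 - r))) (A_letters N ! ((q div 2 + r) mod (20 * N)))"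
    if "r < 20 * N'" for r
  proof -
    have "length (word N') - Suc (Suc (2 * r)) = 2 * (20 * N' - 1 - r)"
      using that by simp
    then have "word_inv G (word N') ! Suc (2 * r) = inv (word N' ! (2 * (20 * N' - 1 - r)))"
      using that by (simp add: word_inv_nth)
    also have "\<dots> = inv (A_letters N' ! (20 * N' - 1 - r))"
      using that by (simp add: word_nth_even)
    finally have letter: "word_inv G (word N') ! Suc (2 * r) = inv (A_letters N' ! (20 * N' - 1 - r))" .
    have "inv (A_letters N' ! (20 * N' - 1 - r)) \<in> A - C"
      using \<open>1 \<le> N'\<close> by (intro inv_A_minus_C A_letters_nth_mem) simp
    moreover have "q + 2 * r < n * (40 * N)" "2 * r < 40 * N' - 1"
      using q that by linarith+
    ultimately have "dceq (inv (A_letters N' ! (20 * N' - 1 - r)))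
        (A_letters N ! (((q + 2 * r) div 2) mod (20 * N)))"
      using occ[of "2 * r"] letter by (intro dceq_wpow_word_nth) simp_all
    then show ?thesis
      by (simp add: add.commute)
  qed
  with assms no_shifted_match_reverse_self no_shifted_match_reverse_long show False
    by blast
qed

lemma cw_word_pow:
  "1 \<le> N \<Longrightarrow> cw G ((A \<union> B) - {\<one>}) (word N) (word_eval G (wpow (word N) n)) = int n"
  by (intro cw_wpow alternating_wpow_word word_not_Nil)

lemma cw_longer_word_pow:
  assumes "1 \<le> N" "10 * N \<le> N'"
  shows "cw G ((A \<union> B) - {\<one>}) (word N') (word_eval G (wpow (word N) n)) = 0"
proof (rule cw_eq_0)
  have "1 \<le> N'"
    using assms by linarith
  then show "opposite (hd (word N')) (last (word N'))"
    using a\<^sub>1 inv_B_minus_C[OF b] by (simp add: hd_word last_word opposite_A_B)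
  show "2 \<le> length (word N')"
    using \<open>1 \<le> N'\<close> by simp
  show "\<not> dc_occurs (tl (word N')) (wpow (word N) n)"
    using assms by (rule not_dc_occurs_tl_word)
qed (simp_all add: alternating_wpow_word alternating_word)

lemma cw_word_inv_pow:
  assumes "1 \<le> N" "N' = N \<or> 10 * N \<le> N'"
  shows "cw G ((A \<union> B) - {\<one>}) (word_inv G (word N')) (word_eval G (wpow (word N) n)) = 0"
proof (rule cw_eq_0)
  have "1 \<le> N'"
    using assms by auto
  have "set (word N') \<subseteq> carrier G"
    using alternating_closed alternating_word by blast
  then show "alternating A B C (word_inv G (word N'))"
    by (simp add: alternating_word_inv alternating_word)
  have "opposite b (inv a\<^sub>1)"
    using opposite_A_B[OF inv_A_minus_C[OF a\<^sub>1] b] by (simp add: opposite_sym)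
  then show "opposite (hd (word_inv G (word N'))) (last (word_inv G (word N')))"
    using word_not_Nil[OF \<open>1 \<le> N'\<close>] \<open>1 \<le> N'\<close> letters_closed
    by (simp add: hd_word_inv last_word_inv hd_word last_word)
  show "2 \<le> length (word_inv G (word N'))"
    using \<open>1 \<le> N'\<close> by simp
  show "\<not> dc_occurs (tl (word_inv G (word N'))) (wpow (word N) n)"
    using assms by (rule not_dc_occurs_tl_word_inv)
qed (simp add: alternating_wpow_word)

end

lemma ten_mult_pow_le: "(i::nat) < j \<Longrightarrow> 10 * 10 ^ i \<le> (10::nat) ^ j"
  by (metis Suc_leI power_Suc power_increasing one_le_numeral)

theorem lemma4p3:
  fixes G :: "('g, 'b) monoid_scheme" and A B C :: "'g set" and a1 a2 b :: 'g
  assumes amalg: "amalgamated_product G A B C"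
    and a1: "a1 \<in> A - C" and a2: "a2 \<in> A - C"
    and a2_dc: "a2 \<notin> {c \<otimes>\<^bsub>G\<^esub> a1 \<otimes>\<^bsub>G\<^esub> c' | c c'. c \<in> C \<and> c' \<in> C}"
    and b: "b \<in> B - C"
  defines "S \<equiv> (A \<union> B) - {\<one>\<^bsub>G\<^esub>}"
    and "w \<equiv> w_word G a1 a2 b"
  shows "(\<forall>n i. n \<ge> 1 \<longrightarrow> cw G S (w i) (word_eval G (wpow (w i) n)) = int n)
       \<and> (\<forall>n i. n \<ge> 1 \<longrightarrow> cw G S (word_inv G (w i)) (word_eval G (wpow (w i) n)) = 0)
       \<and> (\<forall>n i j. n \<ge> 1 \<and> i < j \<longrightarrow> cw G S (w j) (word_eval G (wpow (w i) n)) = 0)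
       \<and> (\<forall>n i j. n \<ge> 1 \<and> i < j \<longrightarrow> cw G S (word_inv G (w j)) (word_eval G (wpow (w i) n)) = 0)"
proof -
  interpret amalgam G A B C
    using amalg by (auto simp: amalgamated_product_def amalgam_def amalgam_axioms_def)
  interpret amalgam_letters G A B C a1 a2 b
    using a1 a2 a2_dc b by unfold_locales (auto simp: dceq_def)
  have w: "w i = word (10 ^ i)" for i
    unfolding w_def by (rule w_word_eq_word)
  have "(1::nat) \<le> 10 ^ i" for i
    by simp
  then show ?thesis
    unfolding S_def w
    using cw_word_pow cw_word_inv_pow cw_longer_word_pow ten_mult_pow_le by auto
qed

end
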